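(* Every continuous-variable PR box (as defined in the context) is an extreme point of the convex set $\mathcal M_{\mathrm{NS}}$ of no-signaling behaviours; i.e., if $\boldsymbol\mu\in\mathcal M_{\mathrm{PR}}$ and $\boldsymbol\mu=q\boldsymbol\mu^*+(1-q)\boldsymbol\mu'$ with $\boldsymbol\mu^*,\boldsymbol\mu'\in\mathcal M_{\mathrm{NS}}$ and $0\le q\le1$, then either $q=1$ and $\boldsymbol\mu^*=\boldsymbol\mu$, or $q=0$ and $\boldsymbol\mu'=\boldsymbol\mu$ (or $\boldsymbol\mu^*=\boldsymbol\mu'=\boldsymbol\mu$).
   Context: A behaviour is a family $\boldsymbol\mu=(\mu_{x,y})_{x,y\in\{0,1\}}$ of Borel probability measures on $\mathbb R\times\mathbb R$; convex combinations are taken componentwise. It is no-signaling if $\mu_{x,0}(A\times\mathbb R)=\mu_{x,1}(A\times\mathbb R)$ for all $x\in\{0,1\}$ and Borel $A\subseteq\mathbb R$, and $\mu_{0,y}(\mathbb R\times B)=\mu_{1,y}(\mathbb R\times B)$ for all $y\in\{0,1\}$ and Borel $B$; $\mathcal M_{\mathrm{NS}}$ denotes the set of no-signaling behaviours. For $(a,b)\in\mathbb R^2$, $\delta_{a,b}$ is the Dirac measure at $(a,b)$. A CV PR box of order $k\in\mathbb N$ is a behaviour of the form $\mu_{x,y}=\frac1k\sum_{j=1}^k\delta_{a_{x,j},\,b_{y,[j+xy]_k}}$, where for each $x,y\in\{0,1\}$, $\boldsymbol a_x=(a_{x,1},\dots,a_{x,k})\in\mathbb R^k$ and $\boldsymbol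 b_y=(b_{y,1},\dots,b_{y,k})\in\mathbb R^k$ each have pairwise distinct components, and $[\,\cdot\,]_k$ denotes reduction modulo $k$ to an index in $\{1,\dots,k\}$. $\mathcal M_{\mathrm{PR}}$ is the set of all CV PR boxes of all orders $k\in\mathbb N$ (for $k=1$ these are the deterministic behaviours $\mu_{x,y}=\delta_{a_x,b_y}$). *)

theory Defs
  imports "HOL-Probability.Probability"
begin

text \<open>A behaviour: a family of Borel probability measures on R x R indexed by
  inputs x, y in {0,1} (encoded as bool, False = 0, True = 1).\<close>

type_synonym behaviour = "bool \<Rightarrow> bool \<Rightarrow> (real \<times> real) measure"

definition is_behaviour :: "behaviour \<Rightarrow> bool" where
  "is_behaviour \<mu> \<longleftrightarrow>
     (\<forall>x y. prob_space (\<mu> x y) \<and> sets (\<mu> x y) = sets (borel :: (real \<times> real) measure))"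

definition no_signaling :: "behaviour \<Rightarrow> bool" where
  "no_signaling \<mu> \<longleftrightarrow> is_behaviour \<mu> \<and>
     (\<forall>x. \<forall>A \<in> sets (borel :: real measure).
        measure (\<mu> x False) (A \<times> UNIV) = measure (\<mu> x True) (A \<times> UNIV)) \<and>
     (\<forall>y. \<forall>B \<in> sets (borel :: real measure).
        measure (\<mu> False y) (UNIV \<times> B) = measure (\<mu> True y) (UNIV \<times> B))"

definition mod_idx :: "nat \<Rightarrow> nat \<Rightarrow> nat" where
  "mod_idx k n = ((n + k - 1) mod k) + 1"

text \<open>CV PR box of order k: mu_{x,y} = (1/k) sum_{j=1..k} delta_{(a_{x,j}, b_{y,[j+xy]_k})}.\<close>
definition is_cv_pr_box_order :: "nat \<Rightarrow> behaviour \<Rightarrow> bool" where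
  "is_cv_pr_box_order k \<mu> \<longleftrightarrow> k \<ge> 1 \<and> is_behaviour \<mu> \<and>
     (\<exists>a b :: bool \<Rightarrow> nat \<Rightarrow> real.
        (\<forall>x. inj_on (a x) {1..k}) \<and> (\<forall>y. inj_on (b y) {1..k}) \<and>
        (\<forall>x y. \<forall>S \<in> sets (borel :: (real \<times> real) measure).
           measure (\<mu> x y) S =
             (1 / real k) * (\<Sum>j = 1..k.
                indicator S (a x j, b y (mod_idx k (j + of_bool x * of_bool y))))))"

definition is_cv_pr_box :: "behaviour \<Rightarrow> bool" where
  "is_cv_pr_box \<mu> \<longleftrightarrow> (\<exists>k. is_cv_pr_box_order k \<mu>)"

definition convex_comb :: "real \<Rightarrow> behaviour \<Rightarrow> behaviour \<Rightarrow> behaviour \<Rightarrow> bool" where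
  "convex_comb q \<mu>1 \<mu>2 \<mu> \<longleftrightarrow>
     (\<forall>x y. \<forall>S \<in> sets (borel :: (real \<times> real) measure).
        measure (\<mu> x y) S = q * measure (\<mu>1 x y) S + (1 - q) * measure (\<mu>2 x y) S)"

end

(* If q nu + (1 - q) nu' = mu with 0 < q < 1, then q nu <= mu, so every nu_{x,y} is concentrated
   on the k atoms (a_{x,j}, b_{y,[j+xy]_k}) of the PR box mu_{x,y} and is determined by their
   weights w_{x,y}(j).  As the a_{x,j} are distinct, Alice's no-signaling condition gives
   w_{x,0} = w_{x,1}; as the b_{y,j} are distinct, Bob's gives w_{1,y}(j) = w_{0,y}([j+y]_k).
   Hence w does not depend on x, y and is invariant under the cyclic shift j -> j+1, so it is
   constant, equal to 1/k by normalisation, i.e. nu = mu. *)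

theory Submission
  imports Defs
begin

lemma behaviour_eqI:
  assumes "is_behaviour \<mu>" "is_behaviour \<nu>"
    and "\<And>x y S. S \<in> sets borel \<Longrightarrow> measure (\<mu> x y) S = measure (\<nu> x y) S"
  shows "\<mu> = \<nu>"
proof (intro ext)
  fix x y
  have "prob_space (\<mu> x y)" "sets (\<mu> x y) = sets borel"
    and "prob_space (\<nu> x y)" "sets (\<nu> x y) = sets borel"
    using assms(1,2) unfolding is_behaviour_def by auto
  then show "\<mu> x y = \<nu> x y"
    using assms(3)
    by (intro measure_eqI) (simp_all add: finite_measure.emeasure_eq_measure prob_space.finite_measure)
qed

lemma mod_idx_in_range: "k \<ge> 1 \<Longrightarrow> mod_idx k n \<in> {1..k}"
  unfolding mod_idx_def by (auto simp: Suc_le_eq)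

lemma mod_idx_eq_iff:
  assumes "k \<ge> 1"
  shows "mod_idx k n = mod_idx k n' \<longleftrightarrow> n mod k = n' mod k"
proof -
  have "mod_idx k m = (m + (k - 1)) mod k + 1" for m
    using assms unfolding mod_idx_def by (simp add: add_diff_assoc)
  then show ?thesis
    by (simp add: nat_mod_eq_iff mod_add_cong)
qed

lemma mod_idx_self: "j \<in> {1..k} \<Longrightarrow> mod_idx k j = j"
proof -
  assume j: "j \<in> {1..k}"
  then have "j + k - 1 = (j - 1) + k" "j - 1 < k" by auto
  then have "(j + k - 1) mod k = j - 1"
    by (simp only: mod_add_self2 mod_less)
  with j show ?thesis
    unfolding mod_idx_def by simp
qed

lemma inj_on_mod_idx_shift:
  assumes "k \<ge> 1"
  shows "inj_on (\<lambda>j. mod_idx k (j + c)) {1..k}"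
proof (rule inj_onI)
  fix j j' assume j: "j \<in> {1..k}" "j' \<in> {1..k}" and "mod_idx k (j + c) = mod_idx k (j' + c)"
  then have "(j + c) mod k = (j' + c) mod k"
    using assms by (simp add: mod_idx_eq_iff)
  then have "j mod k = j' mod k"
    unfolding nat_mod_eq_iff by auto
  moreover have "i mod k = (if i = k then 0 else i)" if "i \<in> {1..k}" for i
    using that by auto
  ultimately show "j = j'"
    using j by (auto split: if_splits)
qed

lemma measure_eq_sum_atoms:
  fixes M :: "'a::t1_space measure"
  assumes M: "finite_measure M" "sets M = sets borel"
    and F: "finite F" "measure M (- F) = 0"
    and S: "S \<in> sets borel"
  shows "measure M S = (\<Sum>p\<in>F. indicator S p * measure M {p})"
proof -
  have finite_sets: "G \<in> sets M" if "finite G" for G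
    using that M(2) by (simp add: borel_closed finite_imp_closed)
  have "S \<in> sets M" "F \<in> sets M"
    using M(2) S finite_sets[OF F(1)] by simp_all
  moreover have "- F = space M - F"
    using sets_eq_imp_space_eq[OF M(2)] by auto
  ultimately have sets: "S \<inter> F \<in> sets M" "S - F \<in> sets M" "- F \<in> sets M"
    by (metis sets.Int, metis sets.Diff, metis sets.compl_sets)
  have "measure M (S - F) \<le> measure M (- F)"
    using sets by (intro finite_measure.finite_measure_mono[OF M(1)]) auto
  then have "measure M (S - F) = 0"
    using F(2) measure_nonneg[of M "S - F"] by linarith
  moreover have "measure M ((S \<inter> F) \<union> (S - F)) = measure M (S \<inter> F) + measure M (S - F)"
    by (rule finite_measure.finite_measure_Union[OF M(1) sets(1,2)]) blast
  ultimately have "measure M S = measure M (S \<inter> F)"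
    by (simp only: Int_Diff_Un add_0_right)
  also have "\<dots> = (\<Sum>p\<in>S \<inter> F. measure M {p})"
    using F(1) by (intro finite_measure.finite_measure_eq_sum_singleton[OF M(1)] finite_sets) auto
  also have "\<dots> = (\<Sum>p\<in>F. indicator S p * measure M {p})"
    using F(1) by (intro sum.mono_neutral_cong_left) (auto simp: indicator_def)
  finally show ?thesis .
qed

lemma eq_first_if_Suc_eq:
  assumes "\<And>j. j \<in> {1..<k} \<Longrightarrow> f (Suc j) = f j"
  shows "j \<in> {1..k} \<Longrightarrow> f j = f 1"
proof (induction j)
  case (Suc j)
  then show ?case
    using assms[of j] by (cases "j = 0") auto
qed simp

lemma no_signaling_is_behaviour: "no_signaling \<nu> \<Longrightarrow> is_behaviour \<nu>"
  unfolding no_signaling_def by simp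

lemma is_behaviour_finite_measure:
  assumes "is_behaviour \<mu>"
  shows "finite_measure (\<mu> x y)" "sets (\<mu> x y) = sets borel"
  using assms unfolding is_behaviour_def by (simp_all add: prob_space.finite_measure)

lemma behaviour_measure_UNIV:
  assumes "is_behaviour \<mu>"
  shows "measure (\<mu> x y) UNIV = 1"
proof -
  have "prob_space (\<mu> x y)" "space (\<mu> x y) = UNIV"
    using assms sets_eq_imp_space_eq[of "\<mu> x y" borel] unfolding is_behaviour_def by auto
  then show ?thesis
    using prob_space.prob_space by metis
qed

lemma convex_comb_fst_le:
  assumes "convex_comb q \<mu>1 \<mu>2 \<mu>" "q \<le> 1" "S \<in> sets borel"
  shows "q * measure (\<mu>1 x y) S \<le> measure (\<mu> x y) S"
proof -
  have "0 \<le> (1 - q) * measure (\<mu>2 x y) S"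
    using assms(2) by (simp add: mult_nonneg_nonneg)
  with assms(1,3) show ?thesis
    unfolding convex_comb_def by fastforce
qed

lemma convex_comb_snd_le:
  assumes "convex_comb q \<mu>1 \<mu>2 \<mu>" "0 \<le> q" "S \<in> sets borel"
  shows "(1 - q) * measure (\<mu>2 x y) S \<le> measure (\<mu> x y) S"
proof -
  have "0 \<le> q * measure (\<mu>1 x y) S"
    using assms(2) by (simp add: mult_nonneg_nonneg)
  with assms(1,3) show ?thesis
    unfolding convex_comb_def by fastforce
qed

locale cv_pr_box_labels =
  fixes k :: nat and a b :: "bool \<Rightarrow> nat \<Rightarrow> real"
  assumes order_pos: "k \<ge> 1"
    and inj_a: "inj_on (a x) {1..k}" and inj_b: "inj_on (b y) {1..k}"
begin

definition outcome :: "bool \<Rightarrow> bool \<Rightarrow> nat \<Rightarrow> real \<times> real" where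
  "outcome x y j = (a x j, b y (mod_idx k (j + of_bool x * of_bool y)))"

lemma inj_on_fst_outcome: "inj_on (fst \<circ> outcome x y) {1..k}"
  using inj_a by (simp add: outcome_def o_def)

lemma inj_on_snd_outcome: "inj_on (snd \<circ> outcome x y) {1..k}"
proof -
  have "inj_on (b y \<circ> (\<lambda>j. mod_idx k (j + of_bool x * of_bool y))) {1..k}"
    using mod_idx_in_range[OF order_pos]
    by (intro comp_inj_on inj_on_mod_idx_shift order_pos inj_on_subset[OF inj_b]) auto
  then show ?thesis
    by (simp add: outcome_def o_def)
qed

lemma measure_eq_sum_outcomes:
  assumes "finite_measure M" "sets M = sets borel"
    and "measure M (- outcome x y ` {1..k}) = 0" and "S \<in> sets borel"
  shows "measure M S = (\<Sum>j=1..k. indicator S (outcome x y j) * measure M {outcome x y j})"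
proof -
  have "measure M S = (\<Sum>p\<in>outcome x y ` {1..k}. indicator S p * measure M {p})"
    by (rule measure_eq_sum_atoms[OF assms(1,2) _ assms(3,4)]) simp
  also have "\<dots> = (\<Sum>j=1..k. indicator S (outcome x y j) * measure M {outcome x y j})"
    by (subst sum.reindex[OF inj_on_imageI2[OF inj_on_fst_outcome]]) (simp only: comp_def)
  finally show ?thesis .
qed

lemma measure_vimage_outcome:
  assumes "finite_measure M" "sets M = sets borel"
    and "measure M (- outcome x y ` {1..k}) = 0"
    and inj: "inj_on (f \<circ> outcome x y) {1..k}" and j: "j \<in> {1..k}"
    and "f -` {f (outcome x y j)} \<in> sets borel"
  shows "measure M (f -` {f (outcome x y j)}) = measure M {outcome x y j}"
proof -
  have "measure M (f -` {f (outcome x y j)}) =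
      (\<Sum>i=1..k. if i = j then measure M {outcome x y i} else 0)"
  proof -
    have "f (outcome x y i) = f (outcome x y j) \<longleftrightarrow> i = j" if "i \<in> {1..k}" for i
      using inj j that unfolding inj_on_def comp_def by blast
    then show ?thesis
      unfolding measure_eq_sum_outcomes[OF assms(1-3,6)] by (intro sum.cong) (simp_all add: indicator_def)
  qed
  with j show ?thesis
    by (simp add: sum.delta)
qed

lemma measure_fst_marginal_outcome:
  assumes "finite_measure M" "sets M = sets borel"
    and "measure M (- outcome x y ` {1..k}) = 0" and "j \<in> {1..k}"
  shows "measure M ({a x j} \<times> UNIV) = measure M {outcome x y j}"
  using measure_vimage_outcome[OF assms(1-3) inj_on_fst_outcome assms(4)]
  by (simp add: outcome_def vimage_fst borel_closed closed_Times)

lemma measure_snd_marginal_outcome: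
  assumes "finite_measure M" "sets M = sets borel"
    and "measure M (- outcome x y ` {1..k}) = 0" and "j \<in> {1..k}"
  shows "measure M (UNIV \<times> {b y (mod_idx k (j + of_bool x * of_bool y))}) = measure M {outcome x y j}"
  using measure_vimage_outcome[OF assms(1-3) inj_on_snd_outcome assms(4)]
  by (simp add: outcome_def vimage_snd borel_closed closed_Times)

lemma no_signaling_outcome_weight_fst:
  assumes ns: "no_signaling \<nu>"
    and supp: "\<And>x y. measure (\<nu> x y) (- outcome x y ` {1..k}) = 0"
    and "i \<in> {1..k}"
  shows "measure (\<nu> x False) {outcome x False i} = measure (\<nu> x True) {outcome x True i}"
  using ns measure_fst_marginal_outcome[OF is_behaviour_finite_measure[OF no_signaling_is_behaviour[OF ns]] supp assms(3)]
  unfolding no_signaling_def by (metis borel_closed closed_singleton)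

lemma no_signaling_outcome_weight_snd:
  assumes ns: "no_signaling \<nu>"
    and supp: "\<And>x y. measure (\<nu> x y) (- outcome x y ` {1..k}) = 0"
    and i: "i \<in> {1..k}"
  shows "measure (\<nu> True y) {outcome True y i} =
    measure (\<nu> False y) {outcome False y (mod_idx k (i + of_bool y))}"
proof -
  let ?m = "mod_idx k (i + of_bool y)"
  note M = is_behaviour_finite_measure[OF no_signaling_is_behaviour[OF ns]]
  have "?m \<in> {1..k}"
    by (rule mod_idx_in_range[OF order_pos])
  then have "measure (\<nu> False y) (UNIV \<times> {b y ?m}) = measure (\<nu> False y) {outcome False y ?m}"
    using measure_snd_marginal_outcome[OF M supp, of ?m False y] by (simp add: mod_idx_self)
  moreover have "measure (\<nu> True y) (UNIV \<times> {b y ?m}) = measure (\<nu> True y) {outcome True y i}"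
    using measure_snd_marginal_outcome[OF M supp i, of True y] by simp
  ultimately show ?thesis
    using ns unfolding no_signaling_def by (metis borel_closed closed_singleton)
qed

lemma no_signaling_outcome_weights_eq:
  assumes ns: "no_signaling \<nu>"
    and supp: "\<And>x y. measure (\<nu> x y) (- outcome x y ` {1..k}) = 0"
    and j: "j \<in> {1..k}"
  shows "measure (\<nu> x y) {outcome x y j} = measure (\<nu> False False) {outcome False False 1}"
proof -
  define w where "w x y i = measure (\<nu> x y) {outcome x y i}" for x y i
  note fst_eq = no_signaling_outcome_weight_fst[OF ns supp, folded w_def]
  note snd_eq = no_signaling_outcome_weight_snd[OF ns supp, folded w_def]
  define f where "f = w False False"
  have w_eq_f: "w x y i = f i" if "i \<in> {1..k}" for x y i
    using fst_eq[OF that] snd_eq[OF that, of False] that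
    unfolding f_def by (cases x; cases y) (simp_all add: mod_idx_self)
  have "f (Suc i) = f i" if "i \<in> {1..<k}" for i
  proof -
    have "Suc i \<in> {1..k}" "i \<in> {1..k}"
      using that by auto
    then show ?thesis
      using snd_eq[of i True] w_eq_f by (simp add: mod_idx_self)
  qed
  then have "w x y j = f 1"
    using eq_first_if_Suc_eq[of k f j] w_eq_f[OF j] j by simp
  then show ?thesis
    unfolding w_def f_def .
qed

lemma no_signaling_outcome_weights:
  assumes ns: "no_signaling \<nu>"
    and supp: "\<And>x y. measure (\<nu> x y) (- outcome x y ` {1..k}) = 0"
    and j: "j \<in> {1..k}"
  shows "measure (\<nu> x y) {outcome x y j} = 1 / real k"
proof -
  let ?c = "measure (\<nu> False False) {outcome False False 1}"
  note \<nu> = no_signaling_is_behaviour[OF ns]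
  have "1 = measure (\<nu> False False) UNIV"
    using behaviour_measure_UNIV[OF \<nu>] by simp
  also have "\<dots> = (\<Sum>i=1..k. indicator UNIV (outcome False False i) * measure (\<nu> False False) {outcome False False i})"
    by (rule measure_eq_sum_outcomes[OF is_behaviour_finite_measure[OF \<nu>] supp]) simp
  also have "\<dots> = (\<Sum>i=1..k. ?c)"
  proof (rule sum.cong)
    show "indicator UNIV (outcome False False i) * measure (\<nu> False False) {outcome False False i} = ?c"
      if "i \<in> {1..k}" for i
      using no_signaling_outcome_weights_eq[OF ns supp that, of False False] by simp
  qed simp
  also have "\<dots> = real k * ?c"
    by simp
  finally have "?c = 1 / real k"
    using order_pos by (simp add: field_simps)
  then show ?thesis
    using no_signaling_outcome_weights_eq[OF ns supp j] by simp
qed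

lemma no_signaling_null_outside_outcomes_eq:
  assumes ns: "no_signaling \<nu>"
    and supp: "\<And>x y. measure (\<nu> x y) (- outcome x y ` {1..k}) = 0"
    and S: "S \<in> sets borel"
  shows "measure (\<nu> x y) S = 1 / real k * (\<Sum>j=1..k. indicator S (outcome x y j))"
proof -
  note \<nu> = no_signaling_is_behaviour[OF ns]
  have "measure (\<nu> x y) S = (\<Sum>j=1..k. indicator S (outcome x y j) * (1 / real k))"
    unfolding measure_eq_sum_outcomes[OF is_behaviour_finite_measure[OF \<nu>] supp S]
    by (intro sum.cong refl) (simp add: no_signaling_outcome_weights[OF ns supp])
  then show ?thesis
    by (simp add: sum_divide_distrib)
qed

definition is_pr_box :: "behaviour \<Rightarrow> bool" where
  "is_pr_box \<mu> \<longleftrightarrow> is_behaviour \<mu> \<and> (\<forall>x y. \<forall>S \<in> sets borel.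
     measure (\<mu> x y) S = 1 / real k * (\<Sum>j=1..k. indicator S (outcome x y j)))"

lemma dominated_null_outside_outcomes:
  assumes "is_pr_box \<mu>" and "r > 0"
    and dom: "\<And>x y S. S \<in> sets borel \<Longrightarrow> r * measure (\<nu> x y) S \<le> measure (\<mu> x y) S"
  shows "measure (\<nu> x y) (- outcome x y ` {1..k}) = 0"
proof -
  let ?C = "- outcome x y ` {1..k}"
  have C: "?C \<in> sets borel"
    by (intro borel_open open_Compl finite_imp_closed) simp
  have "measure (\<mu> x y) ?C = 1 / real k * (\<Sum>j=1..k. indicator ?C (outcome x y j))"
    using assms(1) C unfolding is_pr_box_def by blast
  also have "\<dots> = 0"
    by (simp add: sum.neutral)
  finally have "r * measure (\<nu> x y) ?C \<le> 0"
    using dom[OF C, of x y] by simp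
  with \<open>r > 0\<close> show ?thesis
    by (simp add: mult_le_0_iff measure_le_0_iff)
qed

lemma no_signaling_dominated_eq:
  assumes \<mu>: "is_pr_box \<mu>" and ns: "no_signaling \<nu>" and "r > 0"
    and "\<And>x y S. S \<in> sets borel \<Longrightarrow> r * measure (\<nu> x y) S \<le> measure (\<mu> x y) S"
  shows "\<nu> = \<mu>"
proof (rule behaviour_eqI)
  show "is_behaviour \<nu>" "is_behaviour \<mu>"
    using no_signaling_is_behaviour[OF ns] \<mu> unfolding is_pr_box_def by simp_all
  show "measure (\<nu> x y) S = measure (\<mu> x y) S" if "S \<in> sets borel" for x y S
    using no_signaling_null_outside_outcomes_eq[OF ns dominated_null_outside_outcomes[OF assms(1,3,4)] that]
      \<mu> that unfolding is_pr_box_def by simp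
qed

end

lemma is_cv_pr_boxE:
  assumes "is_cv_pr_box \<mu>"
  obtains k a b where "cv_pr_box_labels k a b" "cv_pr_box_labels.is_pr_box k a b \<mu>"
proof -
  obtain k a b where "k \<ge> 1" "is_behaviour \<mu>"
    and "\<And>x. inj_on (a x) {1..k}" "\<And>y. inj_on (b y) {1..k}"
    and \<mu>_eq: "\<forall>x y. \<forall>S \<in> sets borel. measure (\<mu> x y) S = 1 / real k *
       (\<Sum>j=1..k. indicator S (a x j, b y (mod_idx k (j + of_bool x * of_bool y))))"
    using assms unfolding is_cv_pr_box_def is_cv_pr_box_order_def by blast
  then interpret cv_pr_box_labels k a b
    by unfold_locales
  have "is_pr_box \<mu>"
    using \<open>is_behaviour \<mu>\<close> \<mu>_eq unfolding is_pr_box_def outcome_def by blast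
  with cv_pr_box_labels_axioms show thesis
    by (rule that)
qed

theorem mainTheorem2:
  fixes \<mu> \<mu>s \<mu>' :: behaviour and q :: real
  assumes "is_cv_pr_box \<mu>"
    and "no_signaling \<mu>s" and "no_signaling \<mu>'"
    and "0 \<le> q" and "q \<le> 1"
    and "convex_comb q \<mu>s \<mu>' \<mu>"
  shows "(q = 1 \<and> \<mu>s = \<mu>) \<or> (q = 0 \<and> \<mu>' = \<mu>) \<or> (\<mu>s = \<mu> \<and> \<mu>' = \<mu>)"
proof -
  obtain k a b where box: "cv_pr_box_labels k a b" and \<mu>: "cv_pr_box_labels.is_pr_box k a b \<mu>"
    using is_cv_pr_boxE[OF assms(1)] by blast
  note component_eq = cv_pr_box_labels.no_signaling_dominated_eq[OF box \<mu>]
  have "is_behaviour \<mu>"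
    using \<mu> unfolding cv_pr_box_labels.is_pr_box_def[OF box] by simp
  consider "q = 1" | "q = 0" | "0 < q" "q < 1"
    using assms(4,5) by linarith
  then show ?thesis
  proof cases
    case 1
    then have "\<mu>s = \<mu>"
      using assms(6) no_signaling_is_behaviour[OF assms(2)]
      by (intro behaviour_eqI[OF _ \<open>is_behaviour \<mu>\<close>]) (simp_all add: convex_comb_def)
    with 1 show ?thesis by simp
  next
    case 2
    then have "\<mu>' = \<mu>"
      using assms(6) no_signaling_is_behaviour[OF assms(3)]
      by (intro behaviour_eqI[OF _ \<open>is_behaviour \<mu>\<close>]) (simp_all add: convex_comb_def)
    with 2 show ?thesis by simp
  next
    case 3
    have "\<mu>s = \<mu>"
      using 3 by (intro component_eq[OF assms(2), of q] convex_comb_fst_le[OF assms(6)]) simp_all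
    moreover have "\<mu>' = \<mu>"
      using 3 by (intro component_eq[OF assms(3), of "1 - q"] convex_comb_snd_le[OF assms(6)]) simp_all
    ultimately show ?thesis by simp
  qed
qed

end
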